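(* Let $n\ge 3$, let $K$ be a field, $S_n$ as defined below, and $P=a_1a_2\cdots a_nS_n$. Then: (1) $P$ is a prime ideal of the monoid $S_n$; (2) every prime ideal $Q$ of the algebra $K[S_n]$ with $Q\cap S_n\neq\emptyset$ contains $P$; (3) $K[P]$ is a prime ideal of $K[S_n]$ of height one, i.e. every nonzero prime ideal $P_0$ of $K[S_n]$ with $P_0\subseteq K[P]$ equals $K[P]$.
   Context: For $n\ge 3$, $S_n$ denotes the monoid with generators $a_1,\dots,a_n$ and defining relations $a_1a_2\cdots a_n=a_{\sigma(1)}a_{\sigma(2)}\cdots a_{\sigma(n)}$ for all $\sigma$ in the cyclic subgroup of $\operatorname{Sym}_n$ generated by the cycle $(1,2,\dots,n)$. An ideal $P\neq S$ of a monoid $S$ is prime if $aSb\subseteq P$ with $a,b\in S$ implies $a\in P$ or $b\in P$. For an ideal $I$ of $S_n$, $K[I]$ denotes the $K$-linear span of $I$ in $K[S_n]$. *)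

theory Defs
  imports Main
begin

text \<open>Words over the alphabet {0..<n}; letter i stands for the generator a_(i+1).\<close>

definition words :: "nat \<Rightarrow> nat list set" where
  "words n = {w. set w \<subseteq> {..<n}}"

text \<open>Elementary moves: replace a cyclic rotation of a_1...a_n inside a word by another one.
  (rotate k [0..<n]) is a_(sigma(1))...a_(sigma(n)) for sigma = (1 2 ... n)^k.\<close>

definition elem_rel :: "nat \<Rightarrow> (nat list \<times> nat list) set" where
  "elem_rel n = {(u @ rotate i [0..<n] @ v, u @ rotate j [0..<n] @ v) | u v i j.
                   u \<in> words n \<and> v \<in> words n}"

definition cong_S :: "nat \<Rightarrow> (nat list \<times> nat list) set" where
  "cong_S n = (elem_rel n)\<^sup>*"

definition Sn :: "nat \<Rightarrow> nat list set set" where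
  "Sn n = words n // cong_S n"

definition cls :: "nat \<Rightarrow> nat list \<Rightarrow> nat list set" where
  "cls n w = cong_S n `` {w}"

definition Smult :: "nat \<Rightarrow> nat list set \<Rightarrow> nat list set \<Rightarrow> nat list set" where
  "Smult n X Y = cong_S n `` {x @ y | x y. x \<in> X \<and> y \<in> Y}"

definition mon_ideal :: "'a set \<Rightarrow> ('a \<Rightarrow> 'a \<Rightarrow> 'a) \<Rightarrow> 'a set \<Rightarrow> bool" where
  "mon_ideal S m I \<longleftrightarrow> I \<subseteq> S \<and> (\<forall>s\<in>S. \<forall>x\<in>I. m s x \<in> I \<and> m x s \<in> I)"

definition mon_prime :: "'a set \<Rightarrow> ('a \<Rightarrow> 'a \<Rightarrow> 'a) \<Rightarrow> 'a set \<Rightarrow> bool" where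
  "mon_prime S m P \<longleftrightarrow> mon_ideal S m P \<and> P \<noteq> S \<and>
     (\<forall>a\<in>S. \<forall>b\<in>S. (\<forall>s\<in>S. m (m a s) b \<in> P) \<longrightarrow> a \<in> P \<or> b \<in> P)"

definition supp :: "('a \<Rightarrow> 'k::zero) \<Rightarrow> 'a set" where
  "supp f = {x. f x \<noteq> 0}"

definition alg :: "nat \<Rightarrow> (nat list set \<Rightarrow> 'k::field) set" where
  "alg n = {f. finite (supp f) \<and> supp f \<subseteq> Sn n}"

definition amult :: "nat \<Rightarrow> (nat list set \<Rightarrow> 'k::field) \<Rightarrow> (nat list set \<Rightarrow> 'k) \<Rightarrow> (nat list set \<Rightarrow> 'k)" where
  "amult n f g = (\<lambda>z. \<Sum>(x, y) \<in> {(x, y). x \<in> supp f \<and> y \<in> supp g \<and> Smult n x y = z}. f x * g y)"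

definition basis :: "nat list set \<Rightarrow> (nat list set \<Rightarrow> 'k::field)" where
  "basis s = (\<lambda>x. if x = s then 1 else 0)"

definition alg_ideal :: "nat \<Rightarrow> (nat list set \<Rightarrow> 'k::field) set \<Rightarrow> bool" where
  "alg_ideal n I \<longleftrightarrow> I \<subseteq> alg n \<and> (\<lambda>_. 0) \<in> I \<and>
     (\<forall>f\<in>I. \<forall>g\<in>I. (\<lambda>x. f x + g x) \<in> I) \<and> (\<forall>f\<in>I. (\<lambda>x. - f x) \<in> I) \<and>
     (\<forall>r\<in>alg n. \<forall>f\<in>I. amult n r f \<in> I \<and> amult n f r \<in> I)"

definition alg_prime :: "nat \<Rightarrow> (nat list set \<Rightarrow> 'k::field) set \<Rightarrow> bool" where
  "alg_prime n Q \<longleftrightarrow> alg_ideal n Q \<and> Q \<noteq> alg n \<and>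
     (\<forall>a\<in>alg n. \<forall>b\<in>alg n. (\<forall>r\<in>alg n. amult n (amult n a r) b \<in> Q) \<longrightarrow> a \<in> Q \<or> b \<in> Q)"

definition lin_span :: "nat \<Rightarrow> nat list set set \<Rightarrow> (nat list set \<Rightarrow> 'k::field) set" where
  "lin_span n I = {f \<in> alg n. supp f \<subseteq> I}"

end

theory Submission
  imports Defs
begin

text \<open>
  Write z for the word a_1 a_2 ... a_n (the list [0..<n]) and call a word reduced if it contains
  no cyclic rotation of z as a factor.  The defining relations only rewrite one rotation of z
  into another, so a reduced word is congruent to nothing but itself, and the ideal
  P = z S_n consists exactly of the classes of non-reduced words.  Moreover z is central and
  every word divides a power of z.

  The combinatorial heart is that for n >= 3 any two reduced words u, v can be joined by a
  letter x so that u x v is again reduced.  This gives primeness of P in S_n (part 1) and,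
  applied to reduced words of maximal length in the supports of a and b, primeness of K[P]
  in K[S_n] (part 3).  Part 2 follows because a prime Q containing some basis element s also
  contains a power of z (as s divides it), hence z itself (z is central), hence K[P] = z K[S_n].
  Finally, if a nonzero prime P0 contained in K[P] missed z, then dividing by z would show that
  every element of P0 is divisible by arbitrarily high powers of z, which is impossible by
  comparing word lengths; so P0 contains z and therefore equals K[P].
\<close>

lemma elem_rel_sym: "(a, b) \<in> elem_rel n \<Longrightarrow> (b, a) \<in> elem_rel n"
  unfolding elem_rel_def by blast

lemma cong_sym: "(a, b) \<in> cong_S n \<Longrightarrow> (b, a) \<in> cong_S n"
  unfolding cong_S_def
  by (induction rule: rtrancl_induct) (auto intro: converse_rtrancl_into_rtrancl elem_rel_sym)

lemma cong_trans [trans]: "(a, b) \<in> cong_S n \<Longrightarrow> (b, c) \<in> cong_S n \<Longrightarrow> (a, c) \<in> cong_S n"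
  unfolding cong_S_def by (rule rtrancl_trans)

lemma cong_refl [simp]: "(a, a) \<in> cong_S n"
  unfolding cong_S_def by simp

lemma words_append [simp]: "u @ v \<in> words n \<longleftrightarrow> u \<in> words n \<and> v \<in> words n"
  unfolding words_def by auto

lemma words_Cons [simp]: "x # v \<in> words n \<longleftrightarrow> x < n \<and> v \<in> words n"
  unfolding words_def by auto

lemma words_Nil [simp]: "[] \<in> words n"
  unfolding words_def by auto

lemma rotate_upt_words [simp]: "rotate i [0..<n] \<in> words n"
  unfolding words_def by auto

lemma upt_words [simp]: "[0..<n] \<in> words n"
  unfolding words_def by auto

lemma rotation_cong:
  "u \<in> words n \<Longrightarrow> v \<in> words n \<Longrightarrow>
    (u @ rotate i [0..<n] @ v, u @ rotate j [0..<n] @ v) \<in> cong_S n"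
  unfolding cong_S_def elem_rel_def by blast

lemma elem_rel_append:
  assumes "(a, b) \<in> elem_rel n" "c \<in> words n" "d \<in> words n"
  shows "(c @ a @ d, c @ b @ d) \<in> elem_rel n"
proof -
  obtain u v i j where "a = u @ rotate i [0..<n] @ v" "b = u @ rotate j [0..<n] @ v"
    "u \<in> words n" "v \<in> words n"
    using assms(1) unfolding elem_rel_def by blast
  then show ?thesis
    using assms(2,3) unfolding elem_rel_def
    by (intro CollectI exI[of _ "c @ u"] exI[of _ "v @ d"] exI[of _ i] exI[of _ j]) auto
qed

lemma cong_append:
  "(a, b) \<in> cong_S n \<Longrightarrow> c \<in> words n \<Longrightarrow> d \<in> words n \<Longrightarrow> (c @ a @ d, c @ b @ d) \<in> cong_S n"
  unfolding cong_S_def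
  by (induction rule: rtrancl_induct) (auto intro: rtrancl_into_rtrancl elem_rel_append)

lemma cong_append_right: "(a, b) \<in> cong_S n \<Longrightarrow> d \<in> words n \<Longrightarrow> (a @ d, b @ d) \<in> cong_S n"
  using cong_append[of a b n "[]" d] by simp

lemma cong_append_left: "(a, b) \<in> cong_S n \<Longrightarrow> c \<in> words n \<Longrightarrow> (c @ a, c @ b) \<in> cong_S n"
  using cong_append[of a b n c "[]"] by simp

lemma cong_length: "(a, b) \<in> cong_S n \<Longrightarrow> length a = length b"
  unfolding cong_S_def elem_rel_def by (induction rule: rtrancl_induct) auto

lemma cong_words: "(a, b) \<in> cong_S n \<Longrightarrow> a \<in> words n \<Longrightarrow> b \<in> words n"
  unfolding cong_S_def elem_rel_def by (induction rule: rtrancl_induct) auto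

section \<open>Reduced words\<close>

definition contains_rot :: "nat \<Rightarrow> nat list \<Rightarrow> bool" where
  "contains_rot n w \<longleftrightarrow> (\<exists>u v i. w = u @ rotate i [0..<n] @ v)"

lemma contains_rot_infix: "contains_rot n w \<Longrightarrow> contains_rot n (u @ w @ v)"
  unfolding contains_rot_def by (metis append.assoc)

lemma contains_rot_z: "contains_rot n ([0..<n] @ w)"
  unfolding contains_rot_def by (rule exI[of _ "[]"], rule exI[of _ w], rule exI[of _ 0]) simp

lemma reduced_Nil: "0 < n \<Longrightarrow> \<not> contains_rot n []"
  unfolding contains_rot_def by auto

text \<open>No relation applies to a reduced word, so its congruence class is a singleton.\<close>

lemma cong_reduced: "(a, b) \<in> cong_S n \<Longrightarrow> \<not> contains_rot n a \<Longrightarrow> b = a"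
  unfolding cong_S_def
  by (induction rule: rtrancl_induct) (auto simp: elem_rel_def contains_rot_def)

lemma rotate_upt: "i \<le> n \<Longrightarrow> rotate i [0..<n] = [i..<n] @ [0..<i]"
  by (cases "i = n") (simp_all add: rotate_drop_take)

lemma rotate_upt_Suc:
  assumes "i < n"
  shows "i # rotate (Suc i) [0..<n] = rotate i [0..<n] @ [i]"
proof -
  have "rotate (Suc i) [0..<n] = [Suc i..<n] @ [0..<Suc i]" using assms rotate_upt[of "Suc i" n] by simp
  moreover have "rotate i [0..<n] = [i..<n] @ [0..<i]" using assms rotate_upt[of i n] by simp
  ultimately show ?thesis using assms by (simp add: upt_conv_Cons)
qed

text \<open>z commutes with every letter i, as i z ~ i rot(i+1) = rot(i) i ~ z i, where rot(j)
  is the rotation of z starting with j; hence z commutes with every word.\<close>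

lemma z_comm_letter:
  assumes i: "i < n"
  shows "(i # [0..<n], [0..<n] @ [i]) \<in> cong_S n"
proof -
  have "([i] @ rotate 0 [0..<n] @ [], [i] @ rotate (Suc i) [0..<n] @ []) \<in> cong_S n"
    using i by (intro rotation_cong) auto
  moreover have "([] @ rotate i [0..<n] @ [i], [] @ rotate 0 [0..<n] @ [i]) \<in> cong_S n"
    using i by (intro rotation_cong) auto
  ultimately show ?thesis
    using rotate_upt_Suc[OF i] cong_trans by fastforce
qed

lemma z_comm: "u \<in> words n \<Longrightarrow> (u @ [0..<n], [0..<n] @ u) \<in> cong_S n"
proof (induction u)
  case Nil
  then show ?case by simp
next
  case (Cons i u)
  then have i: "i < n" and u: "u \<in> words n" by auto
  have "(i # u @ [0..<n], i # [0..<n] @ u) \<in> cong_S n"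
    using cong_append_left[OF Cons.IH[OF u], of "[i]"] i by simp
  moreover have "((i # [0..<n]) @ u, ([0..<n] @ [i]) @ u) \<in> cong_S n"
    using cong_append_right[OF z_comm_letter[OF i] u] .
  ultimately show ?case using cong_trans by fastforce
qed

lemma contains_rot_cong_z:
  assumes w: "w \<in> words n" and "contains_rot n w"
  shows "\<exists>u\<in>words n. (w, [0..<n] @ u) \<in> cong_S n"
proof -
  obtain u v i where w_eq: "w = u @ rotate i [0..<n] @ v"
    using \<open>contains_rot n w\<close> unfolding contains_rot_def by blast
  then have u: "u \<in> words n" and v: "v \<in> words n" using w by auto
  have "(w, (u @ [0..<n]) @ v) \<in> cong_S n"
    using rotation_cong[OF u v, of i 0] w_eq by simp
  moreover have "((u @ [0..<n]) @ v, [0..<n] @ u @ v) \<in> cong_S n"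
    using cong_append_right[OF z_comm[OF u] v] by simp
  ultimately show ?thesis using cong_trans u v by (metis words_append)
qed

definition zpow :: "nat \<Rightarrow> nat \<Rightarrow> nat list" where
  "zpow n k = concat (replicate k [0..<n])"

lemma zpow_words [simp]: "zpow n k \<in> words n"
  unfolding zpow_def words_def by auto

lemma zpow_0 [simp]: "zpow n 0 = []"
  unfolding zpow_def by simp

lemma zpow_Suc: "zpow n (Suc k) = [0..<n] @ zpow n k"
  unfolding zpow_def by simp

text \<open>Every word w is a left divisor of z^|w|: each letter i starts the rotation beginning
  with i, which may be replaced by z and then moved to the front.\<close>

lemma divides_zpow: "w \<in> words n \<Longrightarrow> \<exists>t\<in>words n. (w @ t, zpow n (length w)) \<in> cong_S n"
proof (induction w rule: rev_induct)
  case Nil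
  show ?case by (rule bexI[of _ "[]"]) auto
next
  case (snoc i w)
  then have i: "i < n" and w: "w \<in> words n" by auto
  obtain t where t: "t \<in> words n" "(w @ t, zpow n (length w)) \<in> cong_S n"
    using snoc.IH w by blast
  define r where "r = [Suc i..<n] @ [0..<i]"
  have rot_i: "rotate i [0..<n] = i # r"
    using rotate_upt[of i n] i unfolding r_def by (simp add: upt_conv_Cons)
  have r: "r \<in> words n" unfolding r_def words_def using i by auto
  have "((w @ [i]) @ r @ t, (w @ [0..<n]) @ t) \<in> cong_S n"
    using rotation_cong[OF w t(1), of i 0] rot_i by simp
  also have "((w @ [0..<n]) @ t, [0..<n] @ w @ t) \<in> cong_S n"
    using cong_append_right[OF z_comm[OF w] t(1)] by simp
  also have "([0..<n] @ w @ t, zpow n (length (w @ [i]))) \<in> cong_S n"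
    using cong_append_left[OF t(2) upt_words] by (simp add: zpow_Suc)
  finally show ?case using r t(1) by (metis words_append)
qed

section \<open>Joining two reduced words by a letter\<close>

lemma rot_factor_nth:
  assumes "W = p @ rotate i [0..<n] @ q" "l < n"
  shows "W ! (length p + l) = (i + l) mod n"
  using assms by (simp add: nth_append nth_rotate)

lemma rot_factor_covers_letter:
  assumes u: "\<not> contains_rot n u" and v: "\<not> contains_rot n v"
    and W: "u @ [x] @ v = p @ rotate i [0..<n] @ q"
  shows "length p \<le> length u \<and> length u < length p + n"
proof (rule ccontr)
  assume "\<not> ?thesis"
  then consider "length p + n \<le> length u" | "length u < length p" by linarith
  then show False
  proof cases
    case 1
    have "u = take (length u) (u @ [x] @ v)" by simp
    also have "\<dots> = p @ rotate i [0..<n] @ take (length u - length p - n) q"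
      using 1 unfolding W by simp
    finally show False using u unfolding contains_rot_def by blast
  next
    case 2
    have "v = drop (Suc (length u)) (u @ [x] @ v)" by simp
    also have "\<dots> = drop (Suc (length u)) p @ rotate i [0..<n] @ q"
      using 2 unfolding W by simp
    finally show False using v unfolding contains_rot_def by blast
  qed
qed

lemma new_rot_factor:
  assumes n: "2 \<le> n" and u: "\<not> contains_rot n u" and v: "\<not> contains_rot n v"
    and "contains_rot n (u @ [x] @ v)"
  shows "(u \<noteq> [] \<and> x = Suc (last u) mod n) \<or> (v \<noteq> [] \<and> hd v = Suc x mod n)"
proof -
  obtain p q i where W: "u @ [x] @ v = p @ rotate i [0..<n] @ q"
    using \<open>contains_rot n (u @ [x] @ v)\<close> unfolding contains_rot_def by blast
  define j where "j = length u - length p"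
  have cover: "length p + j = length u" "j < n"
    using rot_factor_covers_letter[OF u v W] unfolding j_def by auto
  have letter: "(u @ [x] @ v) ! (length p + l) = (i + l) mod n" if "l < n" for l
    using rot_factor_nth[OF W that] .
  have x: "x = (i + j) mod n"
    using letter[OF cover(2)] cover(1) by (simp add: nth_append)
  show ?thesis
  proof (cases "j = 0")
    case True
    have "length (u @ [x] @ v) = length p + n + length q"
      unfolding W by simp
    then have v_ne: "v \<noteq> []" using True cover n by auto
    have "hd v = (u @ [x] @ v) ! (length p + 1)"
      using True cover(1) v_ne by (simp add: nth_append hd_conv_nth)
    also have "\<dots> = Suc x mod n"
      using letter[of 1] n True x by (simp add: mod_Suc_eq)
    finally show ?thesis using v_ne by simp
  next
    case False
    then have u_ne: "u \<noteq> []" using cover(1) by auto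
    have "last u = (u @ [x] @ v) ! (length p + (j - 1))"
      using False cover(1) u_ne by (simp add: nth_append last_conv_nth)
    also have "\<dots> = (i + (j - 1)) mod n"
      using letter cover(2) by simp
    finally have "Suc (last u) mod n = Suc (i + (j - 1)) mod n" by (simp add: mod_Suc_eq)
    then have "Suc (last u) mod n = x" using False x by simp
    then show ?thesis using u_ne by simp
  qed
qed

lemma avoid_two_values: "3 \<le> (n::nat) \<Longrightarrow> \<exists>x\<in>{0, 1, 2}. x \<noteq> a \<and> Suc x mod n \<noteq> b"
proof -
  assume n: "3 \<le> n"
  have m1: "Suc 0 mod n = 1" "Suc 1 mod n = 2" using n by auto
  have m3: "Suc 2 mod n \<in> {0, 3}"
    using n by (cases "n = 3") auto
  show ?thesis using m1 m3 by (cases "a = 0"; cases "a = 1"; cases "b = 1"; cases "b = 2") auto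
qed

text \<open>One of the letters 0, 1, 2 avoids both forbidden
  values of the previous lemma.\<close>

lemma reduced_join:
  assumes n: "3 \<le> n" and u: "\<not> contains_rot n u" and v: "\<not> contains_rot n v"
  shows "\<exists>x<n. \<not> contains_rot n (u @ [x] @ v)"
proof -
  obtain x where x: "x \<in> {0, 1, 2}" "x \<noteq> Suc (last u) mod n" "Suc x mod n \<noteq> hd v"
    using avoid_two_values[OF n] by blast
  then have "\<not> contains_rot n (u @ [x] @ v)"
    using new_rot_factor[of n u v x] n u v by auto
  moreover have "x < n" using x n by auto
  ultimately show ?thesis by blast
qed

lemma cls_mem: "w \<in> cls n v \<longleftrightarrow> (v, w) \<in> cong_S n"
  unfolding cls_def by auto

lemma cls_eq_iff: "cls n v = cls n w \<longleftrightarrow> (v, w) \<in> cong_S n"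
proof
  assume "cls n v = cls n w"
  moreover have "w \<in> cls n w" by (simp add: cls_mem)
  ultimately have "w \<in> cls n v" by simp
  then show "(v, w) \<in> cong_S n" by (simp add: cls_mem)
next
  assume vw: "(v, w) \<in> cong_S n"
  show "cls n v = cls n w"
    unfolding cls_def using vw cong_sym[OF vw] cong_trans[of v w n] cong_trans[of w v n] by auto
qed

lemma Sn_iff: "c \<in> Sn n \<longleftrightarrow> (\<exists>w\<in>words n. c = cls n w)"
  unfolding Sn_def quotient_def cls_def by auto

lemma cls_Sn: "w \<in> words n \<Longrightarrow> cls n w \<in> Sn n"
  using Sn_iff by blast

lemma Smult_cls:
  assumes v: "v \<in> words n" and w: "w \<in> words n"
  shows "Smult n (cls n v) (cls n w) = cls n (v @ w)"
proof -
  define M where "M = {x @ y |x y. x \<in> cls n v \<and> y \<in> cls n w}"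
  have "(v @ w, x @ y) \<in> cong_S n" if "x \<in> cls n v" "y \<in> cls n w" for x y
  proof -
    have vx: "(v, x) \<in> cong_S n" and wy: "(w, y) \<in> cong_S n"
      using that by (auto simp: cls_mem)
    have "(v @ w, x @ w) \<in> cong_S n" using cong_append_right[OF vx w] .
    also have "(x @ w, x @ y) \<in> cong_S n" using cong_append_left[OF wy cong_words[OF vx v]] .
    finally show ?thesis .
  qed
  then have "cong_S n `` M \<subseteq> cls n (v @ w)"
    unfolding M_def cls_def using cong_trans by blast
  moreover have "v @ w \<in> M"
    unfolding M_def by (intro CollectI exI[of _ v] exI[of _ w]) (simp add: cls_mem)
  then have "cls n (v @ w) \<subseteq> cong_S n `` M" unfolding cls_def by blast
  ultimately show ?thesis unfolding Smult_def M_def by blast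
qed

lemma Smult_Sn:
  assumes "x \<in> Sn n" "y \<in> Sn n"
  shows "Smult n x y \<in> Sn n"
proof -
  obtain u v where "u \<in> words n" "x = cls n u" "v \<in> words n" "y = cls n v"
    using assms Sn_iff by metis
  then show ?thesis by (simp add: Smult_cls cls_Sn)
qed

lemma Smult_assoc:
  assumes "x \<in> Sn n" "y \<in> Sn n" "t \<in> Sn n"
  shows "Smult n (Smult n x y) t = Smult n x (Smult n y t)"
proof -
  obtain a b c where "a \<in> words n" "b \<in> words n" "c \<in> words n"
    and "x = cls n a" "y = cls n b" "t = cls n c"
    using assms Sn_iff by metis
  then show ?thesis by (simp add: Smult_cls)
qed

lemma z_central: "y \<in> Sn n \<Longrightarrow> Smult n (cls n [0..<n]) y = Smult n y (cls n [0..<n])"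
proof -
  assume "y \<in> Sn n"
  then obtain a where a: "a \<in> words n" "y = cls n a" using Sn_iff by metis
  have "cls n (a @ [0..<n]) = cls n ([0..<n] @ a)" using z_comm[OF a(1)] cls_eq_iff by blast
  then show ?thesis unfolding a(2) using a(1) by (simp add: Smult_cls)
qed

definition zS :: "nat \<Rightarrow> nat list set set" where
  "zS n = {Smult n (cls n [0..<n]) s | s. s \<in> Sn n}"

lemma zS_iff:
  assumes w: "w \<in> words n"
  shows "cls n w \<in> zS n \<longleftrightarrow> contains_rot n w"
proof
  assume "cls n w \<in> zS n"
  then obtain s where s: "s \<in> Sn n" "cls n w = Smult n (cls n [0..<n]) s"
    unfolding zS_def by blast
  then obtain w' where w': "w' \<in> words n" "s = cls n w'" using Sn_iff by metis
  then have "cls n w = cls n ([0..<n] @ w')" using s(2) Smult_cls[OF upt_words] by simp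
  then have c: "(w, [0..<n] @ w') \<in> cong_S n" using cls_eq_iff by blast
  show "contains_rot n w"
  proof (rule ccontr)
    assume "\<not> contains_rot n w"
    then have "[0..<n] @ w' = w" using cong_reduced[OF c] by simp
    then show False using contains_rot_z \<open>\<not> contains_rot n w\<close> by metis
  qed
next
  assume "contains_rot n w"
  then obtain u where u: "u \<in> words n" "(w, [0..<n] @ u) \<in> cong_S n"
    using contains_rot_cong_z w by blast
  then have "cls n w = Smult n (cls n [0..<n]) (cls n u)"
    using Smult_cls[OF upt_words u(1)] cls_eq_iff by metis
  then show "cls n w \<in> zS n" unfolding zS_def using cls_Sn[OF u(1)] by blast
qed

lemma zS_subset: "zS n \<subseteq> Sn n"
  unfolding zS_def using Smult_Sn cls_Sn[OF upt_words] by blast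

lemma zS_ideal:
  assumes s: "s \<in> Sn n" and c: "c \<in> zS n"
  shows "Smult n s c \<in> zS n \<and> Smult n c s \<in> zS n"
proof -
  obtain v where v: "v \<in> words n" "s = cls n v" using s Sn_iff by metis
  obtain w where w: "w \<in> words n" "c = cls n w" using c zS_subset Sn_iff by blast
  have "contains_rot n w" using c w zS_iff by blast
  then have "contains_rot n (v @ w)" "contains_rot n (w @ v)"
    using contains_rot_infix[of n w v "[]"] contains_rot_infix[of n w "[]" v] by auto
  then show ?thesis unfolding v(2) w(2) using v(1) w(1) by (simp add: Smult_cls zS_iff)
qed

lemma unit_notin_zS: "0 < n \<Longrightarrow> cls n [] \<notin> zS n"
  using zS_iff[of "[]" n] reduced_Nil by simp

text \<open>Part (1): P is a prime ideal of S_n.  If a = [u] and b = [v] lie outside P, then u and v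
  are reduced, and joining them by a suitable letter x gives a [x] b outside P.\<close>

theorem zS_prime:
  assumes n: "3 \<le> n"
  shows "mon_prime (Sn n) (Smult n) (zS n)"
  unfolding mon_prime_def mon_ideal_def
proof (intro conjI ballI impI)
  show "zS n \<subseteq> Sn n" by (rule zS_subset)
  show "Smult n s x \<in> zS n" "Smult n x s \<in> zS n" if "s \<in> Sn n" "x \<in> zS n" for s x
    using zS_ideal that by blast+
  show "zS n \<noteq> Sn n" using unit_notin_zS[of n] n cls_Sn[of "[]" n] by auto
next
  fix a b assume a: "a \<in> Sn n" and b: "b \<in> Sn n"
    and ab: "\<forall>s\<in>Sn n. Smult n (Smult n a s) b \<in> zS n"
  show "a \<in> zS n \<or> b \<in> zS n"
  proof (rule ccontr)
    assume "\<not> (a \<in> zS n \<or> b \<in> zS n)"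
    moreover obtain u v where u: "u \<in> words n" "a = cls n u" and v: "v \<in> words n" "b = cls n v"
      using a b Sn_iff by metis
    ultimately have "\<not> contains_rot n u" "\<not> contains_rot n v" using zS_iff by blast+
    then obtain x where x: "x < n" "\<not> contains_rot n (u @ [x] @ v)"
      using reduced_join[OF n] by blast
    have "Smult n (Smult n a (cls n [x])) b = cls n (u @ [x] @ v)"
      unfolding u(2) v(2) using u(1) v(1) x(1) by (simp add: Smult_cls)
    moreover have "cls n (u @ [x] @ v) \<notin> zS n" using zS_iff x u(1) v(1) by simp
    ultimately show False using ab cls_Sn[of "[x]" n] x(1) by fastforce
  qed
qed

definition clen :: "nat list set \<Rightarrow> nat" where
  "clen c = length (SOME w. w \<in> c)"

lemma clen_cls: "clen (cls n w) = length w"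
proof -
  have "w \<in> cls n w" by (simp add: cls_mem)
  then have "(SOME w'. w' \<in> cls n w) \<in> cls n w" by (rule someI)
  then show ?thesis unfolding clen_def using cong_length cls_mem by fastforce
qed

lemma clen_Smult:
  assumes "x \<in> Sn n" "y \<in> Sn n"
  shows "clen (Smult n x y) = clen x + clen y"
proof -
  obtain u v where "u \<in> words n" "x = cls n u" "v \<in> words n" "y = cls n v"
    using assms Sn_iff by metis
  then show ?thesis by (simp add: Smult_cls clen_cls)
qed

section \<open>The algebra K[S_n]\<close>

lemma basis_self [simp]: "basis c c = 1"
  unfolding basis_def by simp

lemma supp_basis: "supp (basis c :: _ \<Rightarrow> 'k::field) = {c}"
  unfolding supp_def basis_def by auto

lemma basis_alg: "c \<in> Sn n \<Longrightarrow> (basis c :: _ \<Rightarrow> 'k::field) \<in> alg n"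
  unfolding alg_def by (simp add: supp_basis)

lemma alg_finite: "f \<in> alg n \<Longrightarrow> finite (supp f)"
  unfolding alg_def by simp

lemma alg_supp: "f \<in> alg n \<Longrightarrow> supp f \<subseteq> Sn n"
  unfolding alg_def by simp

lemma supp_amult: "supp (amult n f g) \<subseteq> (\<lambda>(x, y). Smult n x y) ` (supp f \<times> supp g)"
proof
  fix z assume z: "z \<in> supp (amult n f g)"
  show "z \<in> (\<lambda>(x, y). Smult n x y) ` (supp f \<times> supp g)"
  proof (rule ccontr)
    assume "z \<notin> (\<lambda>(x, y). Smult n x y) ` (supp f \<times> supp g)"
    then have no_pairs: "{(x, y). x \<in> supp f \<and> y \<in> supp g \<and> Smult n x y = z} = {}" by blast
    have "amult n f g z = 0" unfolding amult_def no_pairs by simp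
    then show False using z unfolding supp_def by simp
  qed
qed

lemma amult_alg:
  assumes f: "f \<in> alg n" and g: "g \<in> alg n"
  shows "amult n f g \<in> alg n"
proof -
  let ?D = "(\<lambda>(x, y). Smult n x y) ` (supp f \<times> supp g)"
  have "?D \<subseteq> Sn n"
    using alg_supp[OF f] alg_supp[OF g] by (auto intro: Smult_Sn)
  then have "supp (amult n f g) \<subseteq> Sn n"
    using supp_amult[of n f g] by (rule order_trans[rotated])
  moreover have "finite (supp (amult n f g))"
    using supp_amult[of n f g] by (rule finite_subset) (use alg_finite[OF f] alg_finite[OF g] in simp)
  ultimately show ?thesis unfolding alg_def by simp
qed

lemma amult_expand:
  assumes "finite A" "supp f \<subseteq> A" "finite B" "supp g \<subseteq> B"
  shows "amult n f g w = (\<Sum>(x, y)\<in>A \<times> B. f x * g y * of_bool (Smult n x y = w))"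
  unfolding amult_def
  by (rule sum.mono_neutral_cong_left) (use assms in \<open>auto simp: supp_def\<close>)

lemma amult_expand_iter:
  assumes "finite A" "supp f \<subseteq> A" "finite B" "supp g \<subseteq> B"
  shows "amult n f g w = (\<Sum>x\<in>A. \<Sum>y\<in>B. f x * g y * of_bool (Smult n x y = w))"
  using amult_expand[OF assms] by (simp add: sum.cartesian_product)

lemma amult_basis: "amult n (basis c) (basis d) = (basis (Smult n c d) :: _ \<Rightarrow> 'k::field)"
proof
  fix w
  have "amult n (basis c) (basis d) w =
      (\<Sum>x\<in>{c}. \<Sum>y\<in>{d}. basis c x * basis d y * of_bool (Smult n x y = w) :: 'k)"
    by (rule amult_expand_iter) (simp_all add: supp_basis)
  then show "amult n (basis c) (basis d) w = (basis (Smult n c d) :: _ \<Rightarrow> 'k) w"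
    by (simp add: basis_def)
qed

lemma sum_pushforward:
  fixes c :: "'a \<Rightarrow> 'k::comm_semiring_1"
  assumes "finite A" "finite D" "\<phi> ` A \<subseteq> D"
  shows "(\<Sum>p\<in>D. (\<Sum>a\<in>A. c a * of_bool (\<phi> a = p)) * H p) = (\<Sum>a\<in>A. c a * H (\<phi> a))"
proof -
  have "(\<Sum>p\<in>D. (\<Sum>a\<in>A. c a * of_bool (\<phi> a = p)) * H p)
      = (\<Sum>a\<in>A. \<Sum>p\<in>D. c a * of_bool (\<phi> a = p) * H p)"
    by (simp add: sum_distrib_right sum.swap[of _ D])
  also have "\<dots> = (\<Sum>a\<in>A. c a * H (\<phi> a))"
    using assms by (intro sum.cong refl) (auto simp: of_bool_def if_distrib if_distribR cong: if_cong)
  finally show ?thesis .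
qed

lemma amult_left_expand:
  assumes f: "f \<in> alg n" and g: "g \<in> alg n" and h: "h \<in> alg n"
  shows "amult n (amult n f g) h w = (\<Sum>x\<in>supp f. \<Sum>y\<in>supp g. \<Sum>t\<in>supp h.
           f x * g y * h t * of_bool (Smult n (Smult n x y) t = w))"
proof -
  define D where "D = (\<lambda>(x, y). Smult n x y) ` (supp f \<times> supp g)"
  define H where "H p = (\<Sum>t\<in>supp h. h t * of_bool (Smult n p t = w))" for p
  have fin: "finite (supp f)" "finite (supp g)" "finite (supp h)" "finite D"
    using f g h alg_finite unfolding D_def by auto
  have "amult n (amult n f g) h w = (\<Sum>p\<in>D. \<Sum>t\<in>supp h. amult n f g p * h t * of_bool (Smult n p t = w))"
    using fin supp_amult[of n f g] unfolding D_def by (intro amult_expand_iter) auto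
  also have "\<dots> = (\<Sum>p\<in>D. amult n f g p * H p)"
    unfolding H_def by (simp add: sum_distrib_left mult.assoc)
  also have "\<dots> = (\<Sum>p\<in>D. (\<Sum>(x, y)\<in>supp f \<times> supp g. f x * g y * of_bool (Smult n x y = p)) * H p)"
    using fin by (simp add: amult_expand[of "supp f" _ "supp g"])
  also have "\<dots> = (\<Sum>(x, y)\<in>supp f \<times> supp g. f x * g y * H (Smult n x y))"
    using sum_pushforward[of "supp f \<times> supp g" D "\<lambda>(x, y). Smult n x y" "\<lambda>(x, y). f x * g y" H] fin
    unfolding D_def by (simp add: case_prod_beta)
  finally show ?thesis
    unfolding H_def by (simp add: sum.cartesian_product[symmetric] sum_distrib_left mult.assoc)
qed

lemma amult_right_expand:
  assumes f: "f \<in> alg n" and g: "g \<in> alg n" and h: "h \<in> alg n"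
  shows "amult n f (amult n g h) w = (\<Sum>x\<in>supp f. \<Sum>y\<in>supp g. \<Sum>t\<in>supp h.
           f x * g y * h t * of_bool (Smult n x (Smult n y t) = w))"
proof -
  define E where "E = (\<lambda>(y, t). Smult n y t) ` (supp g \<times> supp h)"
  have fin: "finite (supp f)" "finite (supp g)" "finite (supp h)" "finite E"
    using f g h alg_finite unfolding E_def by auto
  have "amult n f (amult n g h) w = (\<Sum>x\<in>supp f. \<Sum>q\<in>E. f x * amult n g h q * of_bool (Smult n x q = w))"
    using fin supp_amult[of n g h] unfolding E_def by (intro amult_expand_iter) auto
  also have "\<dots> = (\<Sum>x\<in>supp f. f x * (\<Sum>q\<in>E.
      (\<Sum>(y, t)\<in>supp g \<times> supp h. g y * h t * of_bool (Smult n y t = q)) * of_bool (Smult n x q = w)))"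
    using fin by (simp add: amult_expand[of "supp g" _ "supp h"] sum_distrib_left mult.assoc)
  also have "\<dots> = (\<Sum>x\<in>supp f. f x *
      (\<Sum>(y, t)\<in>supp g \<times> supp h. g y * h t * of_bool (Smult n x (Smult n y t) = w)))"
    using sum_pushforward[of "supp g \<times> supp h" E "\<lambda>(y, t). Smult n y t" "\<lambda>(y, t). g y * h t"] fin
    unfolding E_def by (simp add: case_prod_beta)
  finally show ?thesis
    by (simp add: sum.cartesian_product[symmetric] sum_distrib_left mult.assoc)
qed

lemma amult_assoc:
  assumes f: "f \<in> alg n" and g: "g \<in> alg n" and h: "h \<in> alg n"
  shows "amult n (amult n f g) h = amult n f (amult n g h)"
proof
  fix w
  show "amult n (amult n f g) h w = amult n f (amult n g h) w"
    unfolding amult_left_expand[OF f g h] amult_right_expand[OF f g h]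
  proof (intro sum.cong refl)
    fix x y t assume "x \<in> supp f" "y \<in> supp g" "t \<in> supp h"
    then have "Smult n (Smult n x y) t = Smult n x (Smult n y t)"
      using alg_supp[OF f] alg_supp[OF g] alg_supp[OF h] by (intro Smult_assoc) auto
    then show "f x * g y * h t * of_bool (Smult n (Smult n x y) t = w) =
        f x * g y * h t * of_bool (Smult n x (Smult n y t) = w)" by simp
  qed
qed

lemma z_central_alg:
  assumes r: "r \<in> alg n"
  shows "amult n (basis (cls n [0..<n])) r = amult n r (basis (cls n [0..<n]))"
proof
  fix w
  let ?z = "cls n [0..<n]"
  have fin: "finite (supp r)" using alg_finite[OF r] .
  have "amult n (basis ?z) r w = (\<Sum>y\<in>supp r. r y * of_bool (Smult n ?z y = w))"
    using amult_expand_iter[of "{?z}" "basis ?z" "supp r" r n w] fin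
    by (simp add: supp_basis del: sum_of_bool_eq sum_mult_of_bool_eq sum_of_bool_mult_eq)
  also have "\<dots> = (\<Sum>y\<in>supp r. r y * of_bool (Smult n y ?z = w))"
  proof (intro sum.cong refl)
    fix y assume "y \<in> supp r"
    then show "r y * of_bool (Smult n ?z y = w) = r y * of_bool (Smult n y ?z = w)"
      using alg_supp[OF r] z_central by auto
  qed
  also have "\<dots> = amult n r (basis ?z) w"
    using amult_expand_iter[of "supp r" r "{?z}" "basis ?z" n w] fin
    by (simp add: supp_basis del: sum_of_bool_eq sum_mult_of_bool_eq sum_of_bool_mult_eq)
  finally show "amult n (basis ?z) r w = amult n r (basis ?z) w" .
qed

section \<open>Part (2): primes of K[S_n] meeting S_n contain K[P]\<close>

lemma ideal_amult_left: "alg_ideal n I \<Longrightarrow> r \<in> alg n \<Longrightarrow> f \<in> I \<Longrightarrow> amult n r f \<in> I"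
  unfolding alg_ideal_def by blast

lemma ideal_amult_right: "alg_ideal n I \<Longrightarrow> r \<in> alg n \<Longrightarrow> f \<in> I \<Longrightarrow> amult n f r \<in> I"
  unfolding alg_ideal_def by blast

lemma span_zS_divisible:
  fixes g :: "nat list set \<Rightarrow> 'k::field"
  assumes g: "g \<in> lin_span n (zS n)"
  shows "\<exists>h\<in>alg n. amult n (basis (cls n [0..<n])) h = g"
proof -
  let ?z = "cls n [0..<n]"
  have fin: "finite (supp g)" and sub: "supp g \<subseteq> zS n"
    using g unfolding lin_span_def alg_def by auto
  have "\<forall>c\<in>supp g. \<exists>s. s \<in> Sn n \<and> Smult n ?z s = c"
    using sub unfolding zS_def by blast
  from bchoice[OF this] obtain \<sigma>
    where \<sigma>: "\<forall>c\<in>supp g. \<sigma> c \<in> Sn n \<and> Smult n ?z (\<sigma> c) = c" by blast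
  text \<open>Write each c in the support of g as z \<sigma>(c) and move the coefficient of c to \<sigma>(c).\<close>
  define h :: "nat list set \<Rightarrow> 'k" where "h y = (\<Sum>c\<in>supp g. g c * of_bool (\<sigma> c = y))" for y
  have supp_h: "supp h \<subseteq> \<sigma> ` supp g"
  proof
    fix y assume y: "y \<in> supp h"
    show "y \<in> \<sigma> ` supp g"
    proof (rule ccontr)
      assume "y \<notin> \<sigma> ` supp g"
      then have "h y = 0" unfolding h_def by (intro sum.neutral) auto
      then show False using y unfolding supp_def by simp
    qed
  qed
  have "supp h \<subseteq> Sn n" using supp_h \<sigma> by blast
  moreover have "finite (supp h)" using supp_h fin finite_surj by blast
  ultimately have h: "h \<in> alg n" unfolding alg_def by simp
  have "amult n (basis ?z) h w = g w" for w
  proof -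
    have "amult n (basis ?z) h w = (\<Sum>y\<in>\<sigma> ` supp g. h y * of_bool (Smult n ?z y = w))"
      using amult_expand_iter[of "{?z}" "basis ?z" "\<sigma> ` supp g" h n w] fin supp_h
      by (simp add: supp_basis del: sum_of_bool_eq sum_mult_of_bool_eq sum_of_bool_mult_eq)
    also have "\<dots> = (\<Sum>c\<in>supp g. g c * of_bool (Smult n ?z (\<sigma> c) = w))"
      unfolding h_def using fin by (intro sum_pushforward) auto
    also have "\<dots> = (\<Sum>c\<in>supp g. g c * of_bool (c = w))"
      using \<sigma> by (intro sum.cong refl) auto
    also have "\<dots> = g w"
      using fin by (cases "g w = 0") (simp_all add: supp_def Int_insert_right)
    finally show ?thesis .
  qed
  then show ?thesis using h by blast
qed

lemma span_zS_subset:
  fixes I :: "(nat list set \<Rightarrow> 'k::field) set"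
  assumes I: "alg_ideal n I" and z: "basis (cls n [0..<n]) \<in> I"
  shows "lin_span n (zS n) \<subseteq> I"
proof
  fix f :: "nat list set \<Rightarrow> 'k" assume "f \<in> lin_span n (zS n)"
  then obtain h where "h \<in> alg n" "f = amult n (basis (cls n [0..<n])) h"
    using span_zS_divisible by metis
  then show "f \<in> I" using ideal_amult_right[OF I] z by simp
qed

text \<open>Since z is central, a prime containing z b contains z or b.\<close>

lemma prime_z_factor:
  assumes Q: "alg_prime n Q" and b: "b \<in> alg n"
    and zb: "amult n (basis (cls n [0..<n])) b \<in> Q"
  shows "basis (cls n [0..<n]) \<in> Q \<or> b \<in> Q"
proof -
  let ?z = "cls n [0..<n]"
  have z: "basis ?z \<in> alg n" using basis_alg[OF cls_Sn[OF upt_words]] .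
  have I: "alg_ideal n Q" using Q unfolding alg_prime_def by simp
  have "amult n (amult n (basis ?z) r) b \<in> Q" if r: "r \<in> alg n" for r
  proof -
    have "amult n (amult n (basis ?z) r) b = amult n r (amult n (basis ?z) b)"
      using z_central_alg[OF r] amult_assoc[OF r z b] by simp
    then show ?thesis using ideal_amult_left[OF I r zb] by simp
  qed
  then show ?thesis using Q z b unfolding alg_prime_def by blast
qed

lemma prime_zpow:
  assumes Q: "alg_prime n Q"
  shows "basis (cls n (zpow n k)) \<in> Q \<Longrightarrow> basis (cls n [0..<n]) \<in> Q"
proof (induction k)
  case 0
  have I: "alg_ideal n Q" using Q unfolding alg_prime_def by simp
  have "amult n (basis (cls n [0..<n])) (basis (cls n [])) = basis (cls n [0..<n])"
    by (simp add: amult_basis Smult_cls)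
  moreover have "basis (cls n []) \<in> Q" using 0 by simp
  ultimately show ?case
    using ideal_amult_left[OF I basis_alg[OF cls_Sn[OF upt_words]]] by metis
next
  case (Suc k)
  have "amult n (basis (cls n [0..<n])) (basis (cls n (zpow n k))) = basis (cls n (zpow n (Suc k)))"
    by (simp add: amult_basis Smult_cls zpow_Suc)
  then show ?case
    using prime_z_factor[OF Q basis_alg[OF cls_Sn[OF zpow_words]]] Suc by metis
qed

text \<open>Part (2): a basis element s in Q divides a power of z, so Q contains z.\<close>

lemma prime_meets_Sn:
  assumes Q: "alg_prime n Q" and s: "s \<in> Sn n" and "basis s \<in> Q"
  shows "basis (cls n [0..<n]) \<in> Q"
proof -
  have I: "alg_ideal n Q" using Q unfolding alg_prime_def by simp
  obtain w where w: "w \<in> words n" "s = cls n w" using s Sn_iff by metis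
  obtain t where t: "t \<in> words n" "(w @ t, zpow n (length w)) \<in> cong_S n"
    using divides_zpow[OF w(1)] by blast
  have "cls n (w @ t) = cls n (zpow n (length w))" using t(2) by (simp add: cls_eq_iff)
  then have "amult n (basis s) (basis (cls n t)) = basis (cls n (zpow n (length w)))"
    using t(1) w by (simp add: amult_basis Smult_cls)
  moreover have "amult n (basis s) (basis (cls n t)) \<in> Q"
    using ideal_amult_right[OF I basis_alg[OF cls_Sn[OF t(1)]] \<open>basis s \<in> Q\<close>] .
  ultimately show ?thesis using prime_zpow[OF Q] by metis
qed

section \<open>Part (3): K[P] is a prime ideal of K[S_n]\<close>

lemma lin_span_iff: "f \<in> lin_span n I \<longleftrightarrow> finite (supp f) \<and> supp f \<subseteq> Sn n \<and> supp f \<subseteq> I"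
  unfolding lin_span_def alg_def by auto

lemma span_zS_ideal: "alg_ideal n (lin_span n (zS n) :: (nat list set \<Rightarrow> 'k::field) set)"
  unfolding alg_ideal_def
proof (intro conjI ballI)
  show "lin_span n (zS n) \<subseteq> (alg n :: (nat list set \<Rightarrow> 'k) set)"
    unfolding lin_span_def by auto
  show "(\<lambda>_. 0) \<in> (lin_span n (zS n) :: (nat list set \<Rightarrow> 'k) set)"
    unfolding lin_span_iff supp_def by simp
next
  fix f g :: "nat list set \<Rightarrow> 'k"
  assume f: "f \<in> lin_span n (zS n)" and g: "g \<in> lin_span n (zS n)"
  have "supp (\<lambda>x. f x + g x) \<subseteq> supp f \<union> supp g" unfolding supp_def by auto
  then show "(\<lambda>x. f x + g x) \<in> lin_span n (zS n)"
    using f g unfolding lin_span_iff by (meson finite_UnI finite_subset le_sup_iff order_trans)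
next
  fix f :: "nat list set \<Rightarrow> 'k"
  assume f: "f \<in> lin_span n (zS n)"
  have "supp (\<lambda>x. - f x) = supp f" unfolding supp_def by auto
  then show "(\<lambda>x. - f x) \<in> lin_span n (zS n)" using f unfolding lin_span_iff by simp
next
  fix r f :: "nat list set \<Rightarrow> 'k"
  assume r: "r \<in> alg n" and f: "f \<in> lin_span n (zS n)"
  then have fa: "f \<in> alg n" and sf: "supp f \<subseteq> zS n" unfolding lin_span_def by auto
  have "supp (amult n r f) \<subseteq> zS n"
  proof
    fix q assume "q \<in> supp (amult n r f)"
    then obtain x y where "x \<in> supp r" "y \<in> supp f" "q = Smult n x y" using supp_amult by blast
    then show "q \<in> zS n" using zS_ideal alg_supp[OF r] sf by blast
  qed
  then show "amult n r f \<in> lin_span n (zS n)" using amult_alg[OF r fa] unfolding lin_span_def by simp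
  have "supp (amult n f r) \<subseteq> zS n"
  proof
    fix q assume "q \<in> supp (amult n f r)"
    then obtain x y where "x \<in> supp f" "y \<in> supp r" "q = Smult n x y" using supp_amult by blast
    then show "q \<in> zS n" using zS_ideal alg_supp[OF r] sf by blast
  qed
  then show "amult n f r \<in> lin_span n (zS n)" using amult_alg[OF fa r] unfolding lin_span_def by simp
qed

lemma amult_coeff_unique:
  fixes a b :: "nat list set \<Rightarrow> 'k::field"
  assumes a: "a \<in> alg n" and b: "b \<in> alg n" and X: "X \<in> Sn n"
    and c: "c \<in> supp a" and d: "d \<in> supp b"
    and unique: "\<And>p t. p \<in> supp a \<Longrightarrow> t \<in> supp b \<Longrightarrow>
                   Smult n (Smult n p X) t = T \<longleftrightarrow> p = c \<and> t = d"
  shows "amult n (amult n a (basis X)) b T = a c * b d"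
proof -
  have fin: "finite (supp a)" "finite (supp b)" using a b alg_finite by auto
  have "amult n (amult n a (basis X)) b T = (\<Sum>p\<in>supp a. \<Sum>y\<in>{X}. \<Sum>t\<in>supp b.
      a p * basis X y * b t * of_bool (Smult n (Smult n p y) t = T))"
    using amult_left_expand[OF a basis_alg[OF X] b] by (simp only: supp_basis)
  also have "\<dots> = (\<Sum>p\<in>supp a. \<Sum>t\<in>supp b. a p * b t * of_bool (Smult n (Smult n p X) t = T))"
    by (simp del: sum_of_bool_eq sum_mult_of_bool_eq sum_of_bool_mult_eq)
  also have "\<dots> = (\<Sum>p\<in>supp a. \<Sum>t\<in>supp b. if p = c \<and> t = d then a p * b t else 0)"
    using unique by (intro sum.cong refl) auto
  also have "\<dots> = (\<Sum>p\<in>supp a. if p = c then a p * b d else 0)"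
  proof (intro sum.cong refl)
    fix p
    show "(\<Sum>t\<in>supp b. if p = c \<and> t = d then a p * b t else 0) = (if p = c then a p * b d else 0)"
      using sum.delta[OF fin(2), of d "\<lambda>t. a p * b t"] d by (cases "p = c") simp_all
  qed
  also have "\<dots> = a c * b d"
    using sum.delta[OF fin(1), of c "\<lambda>p. a p * b d"] c by simp
  finally show ?thesis .
qed

lemma max_reduced_support:
  assumes a: "a \<in> alg n" and "a \<notin> lin_span n (zS n)"
  shows "\<exists>u\<in>words n. \<not> contains_rot n u \<and> cls n u \<in> supp a \<and>
           (\<forall>w\<in>words n. \<not> contains_rot n w \<and> cls n w \<in> supp a \<longrightarrow> length w \<le> length u)"
proof -
  let ?S = "supp a - zS n"
  have fin: "finite ?S" and ne: "?S \<noteq> {}"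
    using a assms(2) unfolding lin_span_def alg_def by auto
  have "Max (clen ` ?S) \<in> clen ` ?S" using fin ne by simp
  then obtain c where c: "c \<in> ?S" "clen c = Max (clen ` ?S)" by auto
  have c_max: "clen p \<le> clen c" if "p \<in> ?S" for p using that fin c(2) by simp
  obtain u where u: "u \<in> words n" "c = cls n u" using c(1) alg_supp[OF a] Sn_iff by blast
  have "length w \<le> length u"
    if "w \<in> words n" "\<not> contains_rot n w" "cls n w \<in> supp a" for w
  proof -
    have "cls n w \<in> ?S" using that zS_iff by blast
    then show ?thesis using c_max[of "cls n w"] u(2) by (simp add: clen_cls)
  qed
  moreover have "\<not> contains_rot n u" "cls n u \<in> supp a" using c(1) u zS_iff by auto
  ultimately show ?thesis using u(1) by blast
qed

lemma reduced_join_unique: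
  assumes red: "\<not> contains_rot n (u @ [x] @ v)"
    and cong: "(u @ [x] @ v, w1 @ [x] @ w2) \<in> cong_S n"
    and max_u: "\<not> contains_rot n w1 \<Longrightarrow> length w1 \<le> length u"
    and max_v: "\<not> contains_rot n w2 \<Longrightarrow> length w2 \<le> length v"
  shows "w1 = u \<and> w2 = v"
proof -
  have eq: "w1 @ [x] @ w2 = u @ [x] @ v" using cong_reduced[OF cong red] .
  have "\<not> contains_rot n w1" "\<not> contains_rot n w2"
    using red contains_rot_infix[of n w1 "[]" "[x] @ w2"] contains_rot_infix[of n w2 "w1 @ [x]" "[]"]
    unfolding eq[symmetric] by auto
  then have "length w1 \<le> length u" "length w2 \<le> length v" using max_u max_v by auto
  moreover have "length w1 + length w2 = length u + length v" using arg_cong[OF eq, of length] by simp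
  ultimately have "length w1 = length u" by simp
  then show ?thesis using eq by simp
qed

text \<open>The primeness condition for K[P]: take reduced words u, v of maximal length in the
  supports of a and b outside P and join them by a letter x; then [u x v] occurs in a [x] b
  with coefficient a([u]) b([v]) \<noteq> 0, but lies outside P.\<close>

lemma span_zS_prime_condition:
  fixes a b :: "nat list set \<Rightarrow> 'k::field"
  assumes n: "3 \<le> n" and a: "a \<in> alg n" and b: "b \<in> alg n"
    and prod: "\<forall>r\<in>alg n. amult n (amult n a r) b \<in> lin_span n (zS n)"
  shows "a \<in> lin_span n (zS n) \<or> b \<in> lin_span n (zS n)"
proof (rule ccontr)
  assume "\<not> ?thesis"
  then have na: "a \<notin> lin_span n (zS n)" and nb: "b \<notin> lin_span n (zS n)" by auto
  obtain u where u: "u \<in> words n" "\<not> contains_rot n u" "cls n u \<in> supp a"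
    "\<forall>w\<in>words n. \<not> contains_rot n w \<and> cls n w \<in> supp a \<longrightarrow> length w \<le> length u"
    using max_reduced_support[OF a na] by blast
  obtain v where v: "v \<in> words n" "\<not> contains_rot n v" "cls n v \<in> supp b"
    "\<forall>w\<in>words n. \<not> contains_rot n w \<and> cls n w \<in> supp b \<longrightarrow> length w \<le> length v"
    using max_reduced_support[OF b nb] by blast
  obtain x where x: "x < n" "\<not> contains_rot n (u @ [x] @ v)"
    using reduced_join[OF n u(2) v(2)] by blast
  let ?X = "cls n [x]" and ?T = "cls n (u @ [x] @ v)"
  have X: "?X \<in> Sn n" using cls_Sn x(1) by simp
  have "Smult n (Smult n p ?X) t = ?T \<longleftrightarrow> p = cls n u \<and> t = cls n v"
    if p: "p \<in> supp a" and t: "t \<in> supp b" for p t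
  proof
    obtain w1 where w1: "w1 \<in> words n" "p = cls n w1" using p alg_supp[OF a] Sn_iff by blast
    obtain w2 where w2: "w2 \<in> words n" "t = cls n w2" using t alg_supp[OF b] Sn_iff by blast
    note w = w1 w2
    assume "Smult n (Smult n p ?X) t = ?T"
    then have "?T = cls n (w1 @ [x] @ w2)" using w x(1) by (simp add: Smult_cls)
    then have "(u @ [x] @ v, w1 @ [x] @ w2) \<in> cong_S n" unfolding cls_eq_iff .
    moreover have "\<not> contains_rot n w1 \<Longrightarrow> length w1 \<le> length u"
      using u(4) w(1) p w(2) by simp
    moreover have "\<not> contains_rot n w2 \<Longrightarrow> length w2 \<le> length v"
      using v(4) w(3) t w(4) by simp
    ultimately have "w1 = u \<and> w2 = v" by (rule reduced_join_unique[OF x(2)])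
    then show "p = cls n u \<and> t = cls n v" using w by simp
  next
    assume "p = cls n u \<and> t = cls n v"
    then show "Smult n (Smult n p ?X) t = ?T" using u(1) v(1) x(1) by (simp add: Smult_cls)
  qed
  then have "amult n (amult n a (basis ?X)) b ?T = a (cls n u) * b (cls n v)"
    by (rule amult_coeff_unique[OF a b X u(3) v(3)])
  moreover have "a (cls n u) * b (cls n v) \<noteq> 0" using u(3) v(3) unfolding supp_def by simp
  ultimately have "?T \<in> supp (amult n (amult n a (basis ?X)) b)" unfolding supp_def by simp
  moreover have "supp (amult n (amult n a (basis ?X)) b) \<subseteq> zS n"
    using prod basis_alg[OF X] unfolding lin_span_def by blast
  moreover have "?T \<notin> zS n" using zS_iff x u(1) v(1) by simp
  ultimately show False by blast
qed

theorem span_zS_prime: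
  assumes n: "3 \<le> n"
  shows "alg_prime n (lin_span n (zS n) :: (nat list set \<Rightarrow> 'k::field) set)"
  unfolding alg_prime_def
proof (intro conjI ballI impI)
  show "alg_ideal n (lin_span n (zS n) :: (nat list set \<Rightarrow> 'k) set)" by (rule span_zS_ideal)
  have "(basis (cls n []) :: nat list set \<Rightarrow> 'k) \<notin> lin_span n (zS n)"
    using unit_notin_zS[of n] n unfolding lin_span_def by (simp add: supp_basis)
  then show "(lin_span n (zS n) :: (nat list set \<Rightarrow> 'k) set) \<noteq> alg n"
    using basis_alg[OF cls_Sn[OF words_Nil]] by blast
next
  fix a b :: "nat list set \<Rightarrow> 'k"
  assume "a \<in> alg n" "b \<in> alg n" "\<forall>r\<in>alg n. amult n (amult n a r) b \<in> lin_span n (zS n)"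
  then show "a \<in> lin_span n (zS n) \<or> b \<in> lin_span n (zS n)"
    by (rule span_zS_prime_condition[OF n])
qed

section \<open>Part (3), continued: K[P] has height one\<close>

text \<open>In a prime P0 \<subseteq> K[P] missing z every element is divisible by arbitrarily high powers
  of z (divide by z and use primeness), so all its support words are arbitrarily long.\<close>

lemma prime_below_span_long:
  fixes P0 :: "(nat list set \<Rightarrow> 'k::field) set"
  assumes P0: "alg_prime n P0" and sub: "P0 \<subseteq> lin_span n (zS n)"
    and z: "basis (cls n [0..<n]) \<notin> P0"
  shows "g \<in> P0 \<Longrightarrow> c \<in> supp g \<Longrightarrow> n * k \<le> clen c"
proof (induction k arbitrary: g c)
  case 0
  then show ?case by simp
next
  case (Suc k)
  let ?z = "cls n [0..<n]"
  obtain h where h: "h \<in> alg n" "amult n (basis ?z) h = g"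
    using span_zS_divisible Suc.prems(1) sub by blast
  then have "h \<in> P0" using prime_z_factor[OF P0 h(1)] Suc.prems(1) z by auto
  obtain y where y: "y \<in> supp h" "c = Smult n ?z y"
    using supp_amult[of n "basis ?z :: _ \<Rightarrow> 'k" h] Suc.prems(2) h(2) by (auto simp: supp_basis)
  have "y \<in> Sn n" using y(1) alg_supp[OF h(1)] by blast
  then have "clen c = n + clen y"
    using y(2) by (simp add: clen_Smult[OF cls_Sn[OF upt_words]] clen_cls)
  moreover have "n * k \<le> clen y" using Suc.IH[OF \<open>h \<in> P0\<close> y(1)] .
  ultimately show ?case by simp
qed

theorem prime_below_span_eq:
  fixes P0 :: "(nat list set \<Rightarrow> 'k::field) set"
  assumes n: "0 < n" and P0: "alg_prime n P0" and nonzero: "P0 \<noteq> {\<lambda>_. 0}"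
    and sub: "P0 \<subseteq> lin_span n (zS n)"
  shows "P0 = lin_span n (zS n)"
proof -
  have I: "alg_ideal n P0" using P0 unfolding alg_prime_def by simp
  have "basis (cls n [0..<n]) \<in> P0"
  proof (rule ccontr)
    assume z: "basis (cls n [0..<n]) \<notin> P0"
    have "(\<lambda>_. 0) \<in> P0" using I unfolding alg_ideal_def by simp
    then obtain g where "g \<in> P0" "g \<noteq> (\<lambda>_. 0)" using nonzero by blast
    then obtain c where "g \<in> P0" "c \<in> supp g" unfolding supp_def by auto
    then have "n * Suc (clen c) \<le> clen c" using prime_below_span_long[OF P0 sub z] by blast
    moreover have "1 * Suc (clen c) \<le> n * Suc (clen c)" using n by (intro mult_le_mono1) simp
    ultimately show False by simp
  qed
  then show ?thesis using span_zS_subset[OF I] sub by blast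
qed

theorem lemma2p5:
  fixes n :: nat and P :: "nat list set set"
  assumes "n \<ge> 3"
    and "P = {Smult n (cls n [0..<n]) s | s. s \<in> Sn n}"
  shows "mon_prime (Sn n) (Smult n) P
    \<and> (\<forall>Q :: (nat list set \<Rightarrow> 'k::field) set.
           alg_prime n Q \<and> (\<exists>s\<in>Sn n. basis s \<in> Q) \<longrightarrow> lin_span n P \<subseteq> Q)
    \<and> alg_prime n (lin_span n P :: (nat list set \<Rightarrow> 'k::field) set)
    \<and> (\<forall>P0 :: (nat list set \<Rightarrow> 'k::field) set.
           alg_prime n P0 \<and> P0 \<noteq> {\<lambda>_. 0} \<and> P0 \<subseteq> lin_span n P \<longrightarrow> P0 = lin_span n P)"
proof -
  have P: "P = zS n" using assms(2) unfolding zS_def .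
  show ?thesis
    unfolding P
  proof (intro conjI allI impI)
    show "mon_prime (Sn n) (Smult n) (zS n)" using zS_prime[OF assms(1)] .
  next
    fix Q :: "(nat list set \<Rightarrow> 'k::field) set"
    assume "alg_prime n Q \<and> (\<exists>s\<in>Sn n. basis s \<in> Q)"
    then obtain s where Q: "alg_prime n Q" and s: "s \<in> Sn n" "basis s \<in> Q" by blast
    have "alg_ideal n Q" using Q unfolding alg_prime_def by simp
    then show "lin_span n (zS n) \<subseteq> Q" using span_zS_subset prime_meets_Sn[OF Q s] by blast
  next
    show "alg_prime n (lin_span n (zS n) :: (nat list set \<Rightarrow> 'k::field) set)"
      using span_zS_prime[OF assms(1)] .
  next
    fix P0 :: "(nat list set \<Rightarrow> 'k::field) set"
    assume "alg_prime n P0 \<and> P0 \<noteq> {\<lambda>_. 0} \<and> P0 \<subseteq> lin_span n (zS n)"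
    moreover have "0 < n" using assms(1) by simp
    ultimately show "P0 = lin_span n (zS n)" using prime_below_span_eq by blast
  qed
qed

end
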